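(* Let $N\ge1$, $\delta>0$, $0<s<1$ and let $G$ be an Orlicz function. Then there exists a constant $C>0$ such that \begin{equation*} \int_{\mathbb{R}^N}G(|u(x+h)-u(x)|)\,dx\le C\,|h|^s\,\Psi_{s,G,\delta}(u) \end{equation*} for all $u\in W^{s,G,\delta}(\mathbb{R}^N)$ and every $h\in\mathbb{R}^N$ with $0<|h|<\min\{\tfrac12,\delta\}$.
   Context: An Orlicz function is a function $G:[0,\infty)\to[0,\infty)$ that is continuous, convex, increasing, with $G(0)=0$, satisfies $G(2t)\le \mathfrak{c}\,G(t)$ for all $t\ge0$ for some $\mathfrak{c}>2$, and $\lim_{t\to0^+}G(t)/t=0$. $\Psi_{s,G,\delta}(u)=\int_{\mathbb{R}^N}\int_{B(x,\delta)}G\big(\frac{|u(x)-u(y)|}{|x-y|^s}\big)\frac{dy\,dx}{|x-y|^N}$; $L^G(\mathbb{R}^N)$ is the set of measurable $u$ with $\int_{\mathbb{R}^N}G(|u|)\,dx<\infty$, and $W^{s,G,\delta}(\mathbb{R}^N)=\{u\in L^G(\mathbb{R}^N):\Psi_{s,G,\delta}(u)<\infty\}$. *)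

theory Defs
  imports "HOL-Analysis.Analysis"
begin

definition orlicz :: "(real \<Rightarrow> real) \<Rightarrow> bool" where
  "orlicz G \<longleftrightarrow>
     (\<forall>t\<ge>0. G t \<ge> 0) \<and>
     continuous_on {0..} G \<and>
     convex_on {0..} G \<and>
     mono_on {0..} G \<and>
     G 0 = 0 \<and>
     (\<exists>c>2. \<forall>t\<ge>0. G (2 * t) \<le> c * G t) \<and>
     ((\<lambda>t. G t / t) \<longlongrightarrow> 0) (at_right 0)"

definition Psi :: "real \<Rightarrow> (real \<Rightarrow> real) \<Rightarrow> real \<Rightarrow> ('a::euclidean_space \<Rightarrow> real) \<Rightarrow> ennreal" where
  "Psi s G \<delta> u =
     (\<integral>\<^sup>+ x. (\<integral>\<^sup>+ y. indicator (ball x \<delta>) y *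
        ennreal (G (\<bar>u x - u y\<bar> / norm (x - y) powr s) / norm (x - y) ^ DIM('a)) \<partial>lebesgue) \<partial>lebesgue)"

definition LG :: "(real \<Rightarrow> real) \<Rightarrow> ('a::euclidean_space \<Rightarrow> real) set" where
  "LG G = {u. u \<in> borel_measurable lebesgue \<and> (\<integral>\<^sup>+ x. ennreal (G \<bar>u x\<bar>) \<partial>lebesgue) < \<infinity>}"

definition W_sGdelta :: "real \<Rightarrow> (real \<Rightarrow> real) \<Rightarrow> real \<Rightarrow> ('a::euclidean_space \<Rightarrow> real) set" where
  "W_sGdelta s G \<delta> = {u \<in> LG G. Psi s G \<delta> u < \<infinity>}"

end

theory Submission
  imports Defs
begin

text \<open>Fix x and h, and let B be the ball with diameter the segment from x to x + h; its volume
  is proportional to |h|^N. Every z in B is at distance less than |h| from both endpoints, so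
  doubling and convexity of G give
    G |u(x+h) - u(x)| <= c/2 (G |u(x+h) - u(z)| + G |u(x) - u(z)|)
                      <= c/2 |h|^(s+N) (k(x+h, z) + k(x, z)),
  where k is gagliardo_kernel, the integrand of Psi, and G(l t) <= l G(t) for l = |x - z|^s <= 1 was used.
  Averaging over z in B bounds G |u(x+h) - u(x)| by a multiple of |h|^s (F(x+h) + F(x)),
  F being the inner integral of Psi; integrating in x and using the translation invariance of
  Lebesgue measure gives the claim with C = c 2^N / |B_1|.\<close>

lemma sigma_finite_measure_completion:
  assumes "sigma_finite_measure M"
  shows "sigma_finite_measure (completion M)"
proof -
  obtain A where A: "countable A" "A \<subseteq> sets M" "\<Union>A = space M" "\<forall>a\<in>A. emeasure M a \<noteq> \<infinity>"
    using sigma_finite_measure.sigma_finite_countable[OF assms] by blast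
  show ?thesis
    by (rule sigma_finite_measure.intro, rule exI[of _ A]) (use A in auto)
qed

lemma lebesgue_translate_measurable:
  "(\<lambda>x. x + h) \<in> (lebesgue :: 'a::euclidean_space measure) \<rightarrow>\<^sub>M lebesgue"
  using lebesgue_affine_measurable[of "\<lambda>_. 1" h]
  by (simp add: euclidean_representation add.commute)

lemma nn_integral_lebesgue_translate:
  fixes f :: "'a::euclidean_space \<Rightarrow> ennreal"
  assumes "f \<in> borel_measurable lebesgue"
  shows "(\<integral>\<^sup>+x. f (x + h) \<partial>lebesgue) = (\<integral>\<^sup>+x. f x \<partial>lebesgue)"
proof -
  have "lebesgue = distr lebesgue lebesgue (\<lambda>x. x + h)"
    using lebesgue_affine_euclidean[of "\<lambda>_. 1" h]
    by (simp add: euclidean_representation density_1 add.commute)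
  then have "(\<integral>\<^sup>+x. f x \<partial>lebesgue) = (\<integral>\<^sup>+x. f x \<partial>distr lebesgue lebesgue (\<lambda>x. x + h))"
    by simp
  also have "\<dots> = (\<integral>\<^sup>+x. f (x + h) \<partial>lebesgue)"
    by (rule nn_integral_distr[OF lebesgue_translate_measurable]) (use assms in simp)
  finally show ?thesis ..
qed

lemma mult_emeasure_le_nn_integral:
  assumes "W \<in> sets M" "\<And>z. z \<in> W \<Longrightarrow> a \<le> g z"
  shows "a * emeasure M W \<le> (\<integral>\<^sup>+z. g z \<partial>M)"
proof -
  have "a * emeasure M W = (\<integral>\<^sup>+z. a * indicator W z \<partial>M)"
    using assms(1) by (simp add: nn_integral_cmult_indicator)
  also have "\<dots> \<le> (\<integral>\<^sup>+z. g z \<partial>M)"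
    using assms(2) by (intro nn_integral_mono) (simp add: indicator_def)
  finally show ?thesis .
qed

lemma dist_in_ball_midpoint:
  fixes a b z :: "'a::real_normed_vector"
  assumes "z \<in> ball (midpoint a b) (dist a b / 2)"
  shows "0 < dist a z" "dist a z < dist a b"
proof -
  have "dist (midpoint a b) z < dist a b / 2" using assms by simp
  then show "dist a z < dist a b"
    using dist_triangle[of a z "midpoint a b"] by (simp add: dist_midpoint)
  show "0 < dist a z"
    using assms by (auto simp: dist_midpoint)
qed

lemma convex_on_scale_le:
  fixes G :: "real \<Rightarrow> real"
  assumes "convex_on {0..} G" "G 0 = 0" "0 \<le> l" "l \<le> 1" "0 \<le> t"
  shows "G (l * t) \<le> l * G t"
  using convex_onD[OF assms(1), of l 0 t] assms(2-) by simp

lemma convex_doubling_add_le: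
  fixes G :: "real \<Rightarrow> real"
  assumes "convex_on {0..} G" "\<forall>t\<ge>0. G (2 * t) \<le> c * G t" "0 \<le> a" "0 \<le> b"
  shows "G (a + b) \<le> c / 2 * (G a + G b)"
proof -
  have "G (a + b) = G ((1 - 1/2) * (2 * a) + 1/2 * (2 * b))"
    by simp
  also have "\<dots> \<le> 1/2 * G (2 * a) + 1/2 * G (2 * b)"
    using convex_onD[OF assms(1), of "1/2" "2 * a" "2 * b"] assms(3,4) by simp
  also have "\<dots> \<le> 1/2 * (c * G a) + 1/2 * (c * G b)"
    using assms(2-4) by (intro add_mono mult_left_mono) auto
  finally show ?thesis by (simp add: algebra_simps)
qed

lemma orlicz_mono_on: "orlicz G \<Longrightarrow> mono_on {0..} G"
  by (simp add: orlicz_def)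

lemma orlicz_quasi_triangle:
  assumes "orlicz G" "\<forall>t\<ge>0. G (2 * t) \<le> c * G t"
  shows "G \<bar>a - b\<bar> \<le> c / 2 * (G \<bar>a - z\<bar> + G \<bar>b - z\<bar>)"
proof -
  have "G \<bar>a - b\<bar> \<le> G (\<bar>a - z\<bar> + \<bar>b - z\<bar>)"
    using orlicz_mono_on[OF assms(1)] by (rule mono_onD) auto
  also have "\<dots> \<le> c / 2 * (G \<bar>a - z\<bar> + G \<bar>b - z\<bar>)"
    using assms(1) unfolding orlicz_def by (intro convex_doubling_add_le assms(2)) auto
  finally show ?thesis .
qed

lemma orlicz_le_difference_quotient:
  assumes "orlicz G" "0 \<le> s" "0 < d" "d \<le> r" "r \<le> 1" "0 \<le> w"
  shows "G w \<le> r powr s * r ^ n * (G (w / d powr s) / d ^ n)"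
proof -
  have G: "convex_on {0..} G" "G 0 = 0" "\<forall>t\<ge>0. 0 \<le> G t"
    using assms(1) unfolding orlicz_def by auto
  define q where "q = w / d powr s"
  have q: "0 \<le> q" "0 \<le> G q"
    using G(3) assms(6) by (auto simp: q_def)
  have "G w = G (d powr s * q)"
    using assms(3) by (simp add: q_def)
  also have "\<dots> \<le> d powr s * G q"
    using assms(2-5) q by (intro convex_on_scale_le G(1,2)) (auto intro: powr_le1)
  also have "\<dots> \<le> r powr s * G q"
    using assms(2-4) q by (intro mult_right_mono powr_mono2) auto
  also have "\<dots> \<le> r powr s * (r ^ n * (G q / d ^ n))"
  proof -
    have "d ^ n \<le> r ^ n" using assms(3,4) by (intro power_mono) auto
    then have "G q \<le> r ^ n * (G q / d ^ n)"
      using q assms(3) by (simp add: field_simps mult_left_mono)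
    then show ?thesis by (intro mult_left_mono) auto
  qed
  finally show ?thesis by (simp add: q_def mult.assoc)
qed

definition gagliardo_kernel ::
    "real \<Rightarrow> (real \<Rightarrow> real) \<Rightarrow> real \<Rightarrow> ('a::euclidean_space \<Rightarrow> real) \<Rightarrow> 'a \<Rightarrow> 'a \<Rightarrow> ennreal" where
  "gagliardo_kernel s G \<delta> u x y =
     indicator (ball x \<delta>) y *
       ennreal (G (\<bar>u x - u y\<bar> / norm (x - y) powr s) / norm (x - y) ^ DIM('a))"

lemma Psi_gagliardo_kernel:
  "Psi s G \<delta> u = (\<integral>\<^sup>+x. (\<integral>\<^sup>+y. gagliardo_kernel s G \<delta> u x y \<partial>lebesgue) \<partial>lebesgue)"
  by (simp add: Psi_def gagliardo_kernel_def)

lemma gagliardo_kernel_measurable: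
  fixes u :: "'a::euclidean_space \<Rightarrow> real"
  assumes [measurable]: "u \<in> borel_measurable lebesgue" "G \<in> borel_measurable borel"
  shows "case_prod (gagliardo_kernel s G \<delta> u) \<in> borel_measurable (lebesgue \<Otimes>\<^sub>M lebesgue)"
proof -
  have [measurable]: "(\<lambda>x. x) \<in> (lebesgue :: 'a measure) \<rightarrow>\<^sub>M borel"
    by (rule measurable_completion) simp
  have ball: "indicator (ball x \<delta>) y = (indicator {p. dist (fst p) (snd p) < \<delta>} (x, y) :: ennreal)"
    for x y :: 'a
    by (simp add: indicator_def)
  show ?thesis
    unfolding gagliardo_kernel_def ball case_prod_beta by measurable
qed

lemma borel_measurable_mono_on_nonneg:
  fixes G :: "real \<Rightarrow> real"
  assumes "mono_on {0..} G"
  shows "(\<lambda>t. G (max 0 t)) \<in> borel_measurable borel"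
  by (rule borel_measurable_mono) (auto intro!: monoI mono_onD[OF assms])

text \<open>G is monotone only on [0, \<infinity>); \<lambda>t. G (max 0 t) is monotone, hence Borel, and has
  the same kernel.\<close>
lemma gagliardo_kernel_max_0:
  "gagliardo_kernel s (\<lambda>t. G (max 0 t)) \<delta> u = gagliardo_kernel s G \<delta> u"
  by (simp add: fun_eq_iff gagliardo_kernel_def)

lemma gagliardo_kernel_integral_measurable:
  fixes u :: "'a::euclidean_space \<Rightarrow> real"
  assumes "u \<in> borel_measurable lebesgue" "mono_on {0..} G"
  shows "gagliardo_kernel s G \<delta> u x \<in> borel_measurable lebesgue"
    and "(\<lambda>x. \<integral>\<^sup>+y. gagliardo_kernel s G \<delta> u x y \<partial>lebesgue) \<in> borel_measurable lebesgue"
proof -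
  have K: "case_prod (gagliardo_kernel s G \<delta> u) \<in> borel_measurable (lebesgue \<Otimes>\<^sub>M lebesgue)"
    using gagliardo_kernel_measurable[OF assms(1) borel_measurable_mono_on_nonneg[OF assms(2)]]
    unfolding gagliardo_kernel_max_0 .
  show "gagliardo_kernel s G \<delta> u x \<in> borel_measurable lebesgue"
    using measurable_compose_Pair1[OF _ K, of x] by simp
  show "(\<lambda>x. \<integral>\<^sup>+y. gagliardo_kernel s G \<delta> u x y \<partial>lebesgue) \<in> borel_measurable lebesgue"
    using sigma_finite_measure.borel_measurable_nn_integral_fst[OF
      sigma_finite_measure_completion[OF sigma_finite_lborel] K] by simp
qed

lemma gagliardo_kernel_eq:
  fixes x y :: "'a::euclidean_space"
  shows "0 < dist x y \<Longrightarrow> dist x y < \<delta> \<Longrightarrow>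
    gagliardo_kernel s G \<delta> u x y = ennreal (G (\<bar>u x - u y\<bar> / dist x y powr s) / dist x y ^ DIM('a))"
  by (simp add: gagliardo_kernel_def dist_norm)

lemma orlicz_increment_le_gagliardo_kernel:
  fixes u :: "'a::euclidean_space \<Rightarrow> real"
  assumes G: "orlicz G" "\<forall>t\<ge>0. G (2 * t) \<le> c * G t" "0 \<le> c"
    and r: "0 \<le> s" "r \<le> 1" "r \<le> \<delta>"
    and pq: "\<And>a. a \<in> {p, q} \<Longrightarrow> 0 < dist a z \<and> dist a z < r"
  shows "ennreal (G \<bar>u p - u q\<bar>)
    \<le> ennreal (c / 2 * r powr s * r ^ DIM('a)) * (gagliardo_kernel s G \<delta> u p z + gagliardo_kernel s G \<delta> u q z)"
proof -
  define K where "K = c / 2 * r powr s * r ^ DIM('a)"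
  define k where "k a = G (\<bar>u a - u z\<bar> / dist a z powr s) / dist a z ^ DIM('a)" for a
  have "0 < r" using pq[of p] by (meson insertI1 order.strict_trans)
  then have K: "0 \<le> K" using G(3) by (simp add: K_def)
  have k: "0 \<le> k a" for a
    using G(1) by (simp add: k_def orlicz_def)
  have bound: "G \<bar>u a - u z\<bar> \<le> r powr s * r ^ DIM('a) * k a"
    and kernel: "gagliardo_kernel s G \<delta> u a z = ennreal (k a)" if "a \<in> {p, q}" for a
  proof -
    show "G \<bar>u a - u z\<bar> \<le> r powr s * r ^ DIM('a) * k a"
      unfolding k_def using pq[OF that] r by (intro orlicz_le_difference_quotient[OF G(1)]) auto
    show "gagliardo_kernel s G \<delta> u a z = ennreal (k a)"
      unfolding k_def using pq[OF that] r by (intro gagliardo_kernel_eq) auto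
  qed
  have "G \<bar>u p - u q\<bar> \<le> c / 2 * (G \<bar>u p - u z\<bar> + G \<bar>u q - u z\<bar>)"
    by (rule orlicz_quasi_triangle[OF G(1,2)])
  also have "\<dots> \<le> c / 2 * (r powr s * r ^ DIM('a) * k p + r powr s * r ^ DIM('a) * k q)"
    using bound G(3) by (intro mult_left_mono add_mono) auto
  also have "\<dots> = K * (k p + k q)"
    by (simp add: K_def algebra_simps)
  finally have "ennreal (G \<bar>u p - u q\<bar>) \<le> ennreal (K * (k p + k q))"
    by (rule ennreal_leI)
  also have "\<dots> = ennreal K * (ennreal (k p) + ennreal (k q))"
    by (simp add: ennreal_mult[OF K add_nonneg_nonneg[OF k k]] ennreal_plus[OF k k])
  also have "\<dots> = ennreal K * (gagliardo_kernel s G \<delta> u p z + gagliardo_kernel s G \<delta> u q z)"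
    using kernel[of p] kernel[of q] by simp
  finally show ?thesis
    unfolding K_def .
qed

lemma orlicz_increment_le_gagliardo_integrals:
  fixes u :: "'a::euclidean_space \<Rightarrow> real" and h x :: 'a
  assumes G: "orlicz G" "\<forall>t\<ge>0. G (2 * t) \<le> c * G t" "0 \<le> c"
    and h: "0 \<le> s" "0 < norm h" "norm h \<le> 1" "norm h \<le> \<delta>"
    and u: "u \<in> borel_measurable lebesgue"
  shows "ennreal (G \<bar>u (x + h) - u x\<bar>)
    \<le> ennreal (c * 2 ^ DIM('a) / (2 * unit_ball_vol DIM('a)) * norm h powr s) *
      ((\<integral>\<^sup>+y. gagliardo_kernel s G \<delta> u (x + h) y \<partial>lebesgue) +
       (\<integral>\<^sup>+y. gagliardo_kernel s G \<delta> u x y \<partial>lebesgue))"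
    (is "ennreal ?D \<le> _ * ?I")
proof -
  define W where "W = ball (midpoint (x + h) x) (dist (x + h) x / 2)"
  define K where "K = c / 2 * norm h powr s * norm h ^ DIM('a)"
  define e where "e = unit_ball_vol DIM('a) * (norm h / 2) ^ DIM('a)"
  have "0 < e" using h(2) by (simp add: e_def)
  have W: "W \<in> sets lebesgue" "emeasure lebesgue W = ennreal e"
    by (simp_all add: W_def e_def dist_norm emeasure_ball)
  have near: "0 < dist a z \<and> dist a z < norm h" if "z \<in> W" "a \<in> {x + h, x}" for a z
  proof -
    have "z \<in> ball (midpoint (x + h) x) (dist (x + h) x / 2)"
      and "z \<in> ball (midpoint x (x + h)) (dist x (x + h) / 2)"
      using that(1) by (simp_all add: W_def midpoint_sym dist_commute)
    note d = dist_in_ball_midpoint[OF this(1)] dist_in_ball_midpoint[OF this(2)]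
    have "dist (x + h) x = norm h" "dist x (x + h) = norm h"
      by (simp_all add: dist_norm)
    then have "0 < dist (x + h) z \<and> dist (x + h) z < norm h" "0 < dist x z \<and> dist x z < norm h"
      using d by linarith+
    then show ?thesis
      using that(2) by blast
  qed
  have "ennreal ?D * emeasure lebesgue W
      \<le> (\<integral>\<^sup>+z. ennreal K * (gagliardo_kernel s G \<delta> u (x + h) z + gagliardo_kernel s G \<delta> u x z) \<partial>lebesgue)"
  proof (rule mult_emeasure_le_nn_integral[OF W(1)])
    fix z
    assume "z \<in> W"
    show "ennreal ?D \<le> ennreal K * (gagliardo_kernel s G \<delta> u (x + h) z + gagliardo_kernel s G \<delta> u x z)"
      unfolding K_def using near[OF \<open>z \<in> W\<close>]
      by (intro orlicz_increment_le_gagliardo_kernel[OF G h(1,3,4)]) blast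
  qed
  also have "\<dots> = ennreal K * ?I"
    using gagliardo_kernel_integral_measurable(1)[OF u orlicz_mono_on[OF G(1)]]
    by (simp add: nn_integral_cmult nn_integral_add)
  finally have "ennreal ?D * ennreal e \<le> ennreal K * ?I"
    by (simp only: W(2))
  moreover have "ennreal K = ennreal e * ennreal (K / e)"
    using \<open>0 < e\<close> G(3) by (simp add: K_def ennreal_mult[symmetric])
  ultimately have "ennreal e * ennreal ?D \<le> ennreal e * (ennreal (K / e) * ?I)"
    by (simp only: mult.assoc mult.commute mult.left_commute)
  then have "ennreal ?D \<le> ennreal (K / e) * ?I"
    using \<open>0 < e\<close> by (simp add: ennreal_mult_le_mult_iff)
  moreover have "K / e = c * 2 ^ DIM('a) / (2 * unit_ball_vol DIM('a)) * norm h powr s"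
    using h(2) by (simp add: K_def e_def field_simps power_divide)
  ultimately show ?thesis by simp
qed

lemma orlicz_translate_modular_le_Psi:
  fixes u :: "'a::euclidean_space \<Rightarrow> real" and h :: 'a
  assumes G: "orlicz G" "\<forall>t\<ge>0. G (2 * t) \<le> c * G t" "0 \<le> c"
    and h: "0 \<le> s" "0 < norm h" "norm h \<le> 1" "norm h \<le> \<delta>"
    and u: "u \<in> borel_measurable lebesgue"
  shows "(\<integral>\<^sup>+x. ennreal (G \<bar>u (x + h) - u x\<bar>) \<partial>lebesgue)
    \<le> ennreal (c * 2 ^ DIM('a) / unit_ball_vol DIM('a) * norm h powr s) * Psi s G \<delta> u"
proof -
  define F where "F x = (\<integral>\<^sup>+y. gagliardo_kernel s G \<delta> u x y \<partial>lebesgue)" for x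
  define k where "k = c * 2 ^ DIM('a) / (2 * unit_ball_vol DIM('a)) * norm h powr s"
  have "0 \<le> k"
    using G(3) by (simp add: k_def)
  have F: "F \<in> borel_measurable lebesgue"
    unfolding F_def by (rule gagliardo_kernel_integral_measurable(2)[OF u orlicz_mono_on[OF G(1)]])
  then have "(\<lambda>x. F (x + h)) \<in> borel_measurable lebesgue"
    by (rule measurable_compose[OF lebesgue_translate_measurable])
  have Psi: "Psi s G \<delta> u = (\<integral>\<^sup>+x. F x \<partial>lebesgue)"
    unfolding Psi_gagliardo_kernel F_def ..
  have "(\<integral>\<^sup>+x. ennreal (G \<bar>u (x + h) - u x\<bar>) \<partial>lebesgue) \<le> (\<integral>\<^sup>+x. ennreal k * (F (x + h) + F x) \<partial>lebesgue)"
    unfolding k_def F_def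
    by (intro nn_integral_mono orlicz_increment_le_gagliardo_integrals[OF G h u])
  also have "\<dots> = ennreal k * ((\<integral>\<^sup>+x. F (x + h) \<partial>lebesgue) + (\<integral>\<^sup>+x. F x \<partial>lebesgue))"
    using F \<open>(\<lambda>x. F (x + h)) \<in> borel_measurable lebesgue\<close>
    by (simp add: nn_integral_cmult nn_integral_add)
  also have "\<dots> = ennreal k * (2 * Psi s G \<delta> u)"
    unfolding Psi nn_integral_lebesgue_translate[OF F] mult_2 ..
  also have "\<dots> = ennreal (2 * k) * Psi s G \<delta> u"
    using \<open>0 \<le> k\<close> by (simp add: ennreal_mult mult_ac)
  also have "2 * k = c * 2 ^ DIM('a) / unit_ball_vol DIM('a) * norm h powr s"
    by (simp add: k_def)
  finally show ?thesis .
qed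

theorem lemma2p12:
  fixes G :: "real \<Rightarrow> real" and s \<delta> :: real
  assumes "\<delta> > 0" and "0 < s" and "s < 1" and "orlicz G"
  shows "\<exists>C>0. \<forall>(u :: 'a::euclidean_space \<Rightarrow> real) \<in> W_sGdelta s G \<delta>. \<forall>h :: 'a.
           0 < norm h \<and> norm h < min (1/2) \<delta> \<longrightarrow>
           (\<integral>\<^sup>+ x. ennreal (G \<bar>u (x + h) - u x\<bar>) \<partial>lebesgue)
             \<le> ennreal (C * norm h powr s) * Psi s G \<delta> u"
proof -
  obtain c where c: "c > 2" "\<forall>t\<ge>0. G (2 * t) \<le> c * G t"
    using assms(4) by (auto simp: orlicz_def)
  define C where "C = c * 2 ^ DIM('a) / unit_ball_vol DIM('a)"
  have "C > 0"
    using c(1) by (simp add: C_def)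
  moreover have "(\<integral>\<^sup>+ x. ennreal (G \<bar>u (x + h) - u x\<bar>) \<partial>lebesgue) \<le> ennreal (C * norm h powr s) * Psi s G \<delta> u"
    if "u \<in> W_sGdelta s G \<delta>" "0 < norm h" "norm h < min (1/2) \<delta>" for u :: "'a \<Rightarrow> real" and h :: 'a
    unfolding C_def using that assms(2) c
    by (intro orlicz_translate_modular_le_Psi[OF assms(4)]) (auto simp: W_sGdelta_def LG_def)
  ultimately show ?thesis
    by blast
qed

end
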